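(* Let $V_s, V_{sr} : [0,\infty) \to \mathbb{R}^6$ be continuously differentiable (the actual and required spatial velocities of the surrogate end-effector), let $M_e, D_e, K_e \in \mathbb{R}^{6\times 6}$ be the environmental mass, damping and stiffness matrices with $M_e$ symmetric positive semidefinite, and let $\mathbf{x}_e : [0,\infty)\to\mathbb{R}^6$ be the environment deformation. Define the contact force and the required contact force $$f_e = M_e \dot V_s + D_e V_s + K_e \mathbf{x}_e, \qquad f_{ed} = M_e \dot V_{sr} + D_e V_s + K_e \mathbf{x}_e,$$ and let ${}^T F = N_c f_e$, ${}^T F_r = N_c f_{ed}$ for a matrix $N_c\in\mathbb{R}^{6\times 6}$, where the contact-frame velocities ${}^T V, {}^T V_r \in \mathbb{R}^6$ satisfy $N_c^T({}^T V_r - {}^T V) = V_{sr} - V_s$. Let the virtual power flow at the contact frame be $$p_T = ({}^T V_r - {}^T V)^T({}^T F_r - {}^T F).$$ Then there exists a positive constant $\varrho_{0s}$ such that $$\liminf_{t\to\infty} \int_0^t p_T \, d\tau \;\ge\; -\varrho_{0s}.$$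
   Context: This concerns a force-reflected teleoperation setting in which a surrogate robot's end-effector (frame $\{T\}$) contacts an unknown environment modeled as a mass–damper–spring system. The virtual power flow (VPF) at a frame $\{A\}$ is defined as the inner product of the spatial velocity error and the spatial force error, $p_A = ({}^A V_r - {}^A V)^T({}^A F_r - {}^A F)$, where the subscript $r$ denotes "required" quantities generated by the controller. *)

theory Defs
  imports "HOL-Analysis.Analysis"
begin

definition msd_force ::
  "real^6^6 \<Rightarrow> real^6^6 \<Rightarrow> real^6^6 \<Rightarrow> real^6 \<Rightarrow> real^6 \<Rightarrow> real^6 \<Rightarrow> real^6" where
  "msd_force M D K acc vel defo = M *v acc + D *v vel + K *v defo"

definition vpf :: "real^6 \<Rightarrow> real^6 \<Rightarrow> real^6 \<Rightarrow> real^6 \<Rightarrow> real" where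
  "vpf Vr V Fr F = (Vr - V) \<bullet> (Fr - F)"

end

theory Submission
  imports Defs
begin

text \<open>The damping and stiffness terms are common to the actual and the required contact force,
  so they cancel in the virtual power flow. With the velocity error \<open>e = V\<^sub>s\<^sub>r - V\<^sub>s\<close>
  the flow becomes \<open>e \<bullet> M\<^sub>e e'\<close>, the time derivative of the kinetic energy
  \<open>e \<bullet> M\<^sub>e e / 2\<close> of the error. Its integral over \<open>[0, t]\<close> is therefore the
  energy at \<open>t\<close> minus the energy at \<open>0\<close>, which is at least minus the initial energy
  because \<open>M\<^sub>e\<close> is positive semidefinite.\<close>

lemma vpf_msd_force_same_state:
  fixes N M :: "real^6^6"
  shows "vpf Vr V (N *v msd_force M D K a' v x) (N *v msd_force M D K a v x)
       = (transpose N *v (Vr - V)) \<bullet> (M *v (a' - a))"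
proof -
  have "N *v msd_force M D K a' v x - N *v msd_force M D K a v x = N *v (M *v (a' - a))"
    unfolding msd_force_def
    by (simp add: matrix_vector_mult_diff_distrib[symmetric] matrix_vector_right_distrib)
  then show ?thesis
    unfolding vpf_def by (simp add: dot_lmul_matrix)
qed

lemma inner_matrix_vector_symmetric:
  fixes M :: "real^'n^'n"
  assumes "transpose M = M"
  shows "x \<bullet> (M *v y) = y \<bullet> (M *v x)"
proof -
  have "x \<bullet> (M *v y) = (transpose M *v x) \<bullet> y"
    by (simp add: dot_lmul_matrix)
  with assms show ?thesis
    by (simp add: inner_commute)
qed

lemma has_vector_derivative_quadratic_form:
  fixes M :: "real^'n^'n" and e :: "real \<Rightarrow> real^'n"
  assumes sym: "transpose M = M"
    and e: "(e has_vector_derivative e') (at t within S)"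
  shows "((\<lambda>\<tau>. e \<tau> \<bullet> (M *v e \<tau>) / 2) has_vector_derivative e t \<bullet> (M *v e')) (at t within S)"
proof -
  have de: "(e has_derivative (\<lambda>h. h *\<^sub>R e')) (at t within S)"
    using e by (simp add: has_vector_derivative_def)
  have "((\<lambda>\<tau>. M *v e \<tau>) has_derivative (\<lambda>h. M *v (h *\<^sub>R e'))) (at t within S)"
    using bounded_linear.has_derivative[OF matrix_vector_mul_bounded_linear de] .
  from has_derivative_inner[OF de this]
  have "((\<lambda>\<tau>. e \<tau> \<bullet> (M *v e \<tau>) / 2) has_derivative
      (\<lambda>h. (e t \<bullet> (M *v (h *\<^sub>R e')) + (h *\<^sub>R e') \<bullet> (M *v e t)) / 2)) (at t within S)"
    by (rule bounded_linear.has_derivative[OF bounded_linear_divide])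
  moreover have "(\<lambda>h. (e t \<bullet> (M *v (h *\<^sub>R e')) + (h *\<^sub>R e') \<bullet> (M *v e t)) / 2)
      = (\<lambda>h. h *\<^sub>R (e t \<bullet> (M *v e')))"
    using inner_matrix_vector_symmetric[OF sym, of e' "e t"]
    by (auto simp: matrix_vector_mult_scaleR algebra_simps)
  ultimately show ?thesis
    by (simp add: has_vector_derivative_def)
qed

lemma integral_quadratic_form_derivative_ge:
  fixes M :: "real^'n^'n" and e e' :: "real \<Rightarrow> real^'n"
  assumes sym: "transpose M = M"
    and psd: "\<And>x. 0 \<le> x \<bullet> (M *v x)"
    and e: "\<And>t. 0 \<le> t \<Longrightarrow> (e has_vector_derivative e' t) (at t within {0..})"
    and "0 \<le> t"
  shows "- (e 0 \<bullet> (M *v e 0)) / 2 \<le> integral {0..t} (\<lambda>\<tau>. e \<tau> \<bullet> (M *v e' \<tau>))"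
proof -
  let ?energy = "\<lambda>\<tau>. e \<tau> \<bullet> (M *v e \<tau>) / 2"
  have "((\<lambda>\<tau>. e \<tau> \<bullet> (M *v e' \<tau>)) has_integral ?energy t - ?energy 0) {0..t}"
    using \<open>0 \<le> t\<close>
    by (intro fundamental_theorem_of_calculus)
      (auto intro: has_vector_derivative_within_subset[OF has_vector_derivative_quadratic_form[OF sym e]])
  then have "integral {0..t} (\<lambda>\<tau>. e \<tau> \<bullet> (M *v e' \<tau>)) = ?energy t - ?energy 0"
    by (rule integral_unique)
  moreover have "0 \<le> ?energy t"
    using psd by simp
  ultimately show ?thesis
    by simp
qed

theorem lemma4:
  fixes Vs Vsr Vs' Vsr' xe TV TVr :: "real \<Rightarrow> real^6"
    and Me De Ke Nc :: "real^6^6"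
  assumes Vs_deriv: "\<forall>t\<ge>0. (Vs has_vector_derivative Vs' t) (at t within {0..})"
    and Vs_cont: "continuous_on {0..} Vs'"
    and Vsr_deriv: "\<forall>t\<ge>0. (Vsr has_vector_derivative Vsr' t) (at t within {0..})"
    and Vsr_cont: "continuous_on {0..} Vsr'"
    and Me_sym: "transpose Me = Me"
    and Me_psd: "\<forall>x. 0 \<le> x \<bullet> (Me *v x)"
    and contact_vel: "\<forall>t\<ge>0. transpose Nc *v (TVr t - TV t) = Vsr t - Vs t"
  shows "\<exists>\<rho>>0. Liminf at_top
           (\<lambda>t. ereal (integral {0..t}
              (\<lambda>\<tau>. vpf (TVr \<tau>) (TV \<tau>)
                      (Nc *v msd_force Me De Ke (Vsr' \<tau>) (Vs \<tau>) (xe \<tau>))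
                      (Nc *v msd_force Me De Ke (Vs' \<tau>) (Vs \<tau>) (xe \<tau>)))))
         \<ge> ereal (- \<rho>)"
proof -
  define flow where "flow = (\<lambda>\<tau>. vpf (TVr \<tau>) (TV \<tau>)
    (Nc *v msd_force Me De Ke (Vsr' \<tau>) (Vs \<tau>) (xe \<tau>))
    (Nc *v msd_force Me De Ke (Vs' \<tau>) (Vs \<tau>) (xe \<tau>)))"
  define e where "e = (\<lambda>\<tau>. Vsr \<tau> - Vs \<tau>)"
  define \<rho> where "\<rho> = e 0 \<bullet> (Me *v e 0) / 2 + 1"
  have e_deriv: "(e has_vector_derivative Vsr' t - Vs' t) (at t within {0..})" if "0 \<le> t" for t
    unfolding e_def using Vs_deriv Vsr_deriv that by (auto intro!: derivative_intros)
  have "- \<rho> \<le> integral {0..t} flow" if "0 \<le> t" for t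
  proof -
    have "integral {0..t} flow = integral {0..t} (\<lambda>\<tau>. e \<tau> \<bullet> (Me *v (Vsr' \<tau> - Vs' \<tau>)))"
      using contact_vel by (intro integral_cong) (auto simp: flow_def vpf_msd_force_same_state e_def)
    with integral_quadratic_form_derivative_ge[OF Me_sym Me_psd[rule_format] e_deriv that]
    show ?thesis
      unfolding \<rho>_def by simp
  qed
  then have "\<forall>\<^sub>F t in at_top. ereal (- \<rho>) \<le> ereal (integral {0..t} flow)"
    by (auto intro: eventually_mono[OF eventually_ge_at_top[of "0::real"]])
  moreover have "0 < \<rho>"
    unfolding \<rho>_def using Me_psd by (simp add: add_nonneg_pos)
  ultimately show ?thesis
    unfolding flow_def by (blast intro: Liminf_bounded)
qed

end
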